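(* Fix $n\in\mathbb N$. In the $q$-shuffle algebra $\mathbb V$, each of the following pairs of sets (with $i,j$ ranging over $\mathbb N$ with $i+j=n$) have the same linear span: (1) $\{G_i\star W_{-j}\}$ and $\{W_{-j}\star G_i\}$; (2) $\{G_i\star W_{j+1}\}$ and $\{W_{j+1}\star G_i\}$; (3) $\{\tilde G_i\star W_{-j}\}$ and $\{W_{-j}\star\tilde G_i\}$; (4) $\{\tilde G_i\star W_{j+1}\}$ and $\{W_{j+1}\star \tilde G_i\}$.
   Context: Let $\mathbb F$ be a field and let $q\in\mathbb F$ be nonzero and not a root of unity. Let $\mathbb V$ be the free associative $\mathbb F$-algebra on noncommuting $x,y$, with basis the words (including $1$). Juxtaposition denotes concatenation. Set $\langle x,x\rangle=\langle y,y\rangle=2$ and $\langle x,y\rangle=\langle y,x\rangle=-2$. The $q$-shuffle product $\star$ is the bilinear product determined as follows: - $1\star v=v\star 1=v$; - for nontrivial words $u=u_1\cdots u_r$ and $v=v_1\cdots v_s$, $$u\star v=u_1((u_2\cdots u_r)\star v)+v_1(u\star(v_2\cdots v_s))q^{\langle u_1,v_1\rangle+\cdots+\langle u_r,v_1\rangle}.$$ This makes $\mathbb V$ an associative algebra, the $q$-shuffle algebra. For $k\in\mathbb N$: - $W_{-k}=xyx\cdots x$ is the alternating word of length $2k+1$ beginning and ending with $x$; - $W_{k+1}=yxy\cdots y$ is the alternating word of length $2k+1$ beginning and ending with $y$; - $G_k=yxyx\cdots yx$ is the word of length $2k$; - $\tilde G_k=xyxy\cdots xy$ is the word of length $2k$;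 - $G_0=\tilde G_0=1$. *)

theory Defs
  imports Main
begin

datatype letter = X | Y

type_synonym word = "letter list"

text \<open>An element of the free algebra V over a field 'a is represented by its
coefficient function on words (basis vectors); here only finitely supported
ones occur.\<close>

definition pairing :: "letter \<Rightarrow> letter \<Rightarrow> int" where
  "pairing a b = (if a = b then 2 else -2)"

definition basis :: "word \<Rightarrow> (word \<Rightarrow> 'a::field)" where
  "basis u = (\<lambda>w. if w = u then 1 else 0)"

definition lcons :: "letter \<Rightarrow> (word \<Rightarrow> 'a::field) \<Rightarrow> (word \<Rightarrow> 'a)" where
  "lcons a f = (\<lambda>w. case w of [] \<Rightarrow> 0 | c # w' \<Rightarrow> if c = a then f w' else 0)"

fun qshuffle :: "'a::field \<Rightarrow> word \<Rightarrow> word \<Rightarrow> (word \<Rightarrow> 'a)" where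
  "qshuffle q [] v = basis v"
| "qshuffle q (a # u) [] = basis (a # u)"
| "qshuffle q (a # u) (b # v) =
     (\<lambda>w. lcons a (qshuffle q u (b # v)) w
          + lcons b (qshuffle q (a # u) v) w
            * q powi (sum_list (map (\<lambda>c. pairing c b) (a # u))))"

definition lin_span :: "(word \<Rightarrow> 'a::field) set \<Rightarrow> (word \<Rightarrow> 'a) set" where
  "lin_span S = {f. \<exists>(I::nat set) c v. finite I \<and> v ` I \<subseteq> S \<and>
                        f = (\<lambda>w. \<Sum>i\<in>I. c i * v i w)}"

text \<open>W_{-k} = xyx...x (length 2k+1); W_{k+1} = yxy...y (length 2k+1);
G_k = yx...yx (length 2k); Gt_k = xy...xy (length 2k).\<close>
definition Wneg :: "nat \<Rightarrow> word" where
  "Wneg k = concat (replicate k [X, Y]) @ [X]"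

definition Wpos :: "nat \<Rightarrow> word" where
  "Wpos k = concat (replicate k [Y, X]) @ [Y]"

definition Gw :: "nat \<Rightarrow> word" where
  "Gw k = concat (replicate k [Y, X])"

definition Gtw :: "nat \<Rightarrow> word" where
  "Gtw k = concat (replicate k [X, Y])"

end

(*
  Fix a letter a, let b be the other one, and put G_k = (ba)^k and W_k = a G_k; for a = x these
  are G_k and W_{-k}, for a = y they are \tilde G_k and W_{k+1}. Expanding by the first letter,
  with j = n - i,
    G_i \<star> W_j = a (G_i \<star> G_j) + b (W_{i-1} \<star> W_j),
    W_j \<star> G_i = a (G_j \<star> G_i) + q^{-2} b (W_j \<star> W_{i-1}),
  where the b-terms are absent for i = 0. An induction on i + j shows that G_i \<star> G_j and
  W_i \<star> W_j are symmetric in i and j, so both families have the form X_i + c Y_i (c = 1, resp.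
  c = q^{-2}) with X_{n-i} = X_i, Y_{n-i} = Y_{i+1} and Y_0 = 0. The differences
  (X_{n-i} + c Y_{n-i}) - (X_i + c Y_i) = c (Y_{i+1} - Y_i) recover every Y_i and then every X_i,
  so both families span the space spanned by all X_i and Y_i: this is (1) and (4). Reversing
  words is an antiautomorphism, (u \<star> v) o rev = rev v \<star> rev u; it fixes the W's and
  exchanges G_k with \tilde G_k, so it carries (1) to (3) and (4) to (2).
*)

theory Submission
  imports Defs "HOL.Vector_Spaces" "HOL-Library.Function_Algebras"
begin

definition smult :: "'a::field \<Rightarrow> ('b \<Rightarrow> 'a) \<Rightarrow> 'b \<Rightarrow> 'a" where
  "smult c f = (\<lambda>w. c * f w)"

interpretation V: vector_space "smult :: 'a::field \<Rightarrow> ('b \<Rightarrow> 'a) \<Rightarrow> 'b \<Rightarrow> 'a"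
  by unfold_locales (simp_all add: smult_def fun_eq_iff algebra_simps)

lemma sum_fun_apply: "sum f A x = (\<Sum>a\<in>A. f a x)"
  by (induction A rule: infinite_finite_induct) auto

lemma lin_span_eq_span: "lin_span S = V.span S"
proof
  show "lin_span S \<subseteq> V.span S"
  proof
    fix f assume "f \<in> lin_span S"
    then obtain I :: "nat set" and c v where "finite I" "v ` I \<subseteq> S"
      and f: "f = (\<lambda>w. \<Sum>i\<in>I. c i * v i w)"
      unfolding lin_span_def by blast
    then have "f = (\<Sum>i\<in>I. smult (c i) (v i))"
      by (simp add: fun_eq_iff sum_fun_apply smult_def)
    moreover have "smult (c i) (v i) \<in> V.span S" if "i \<in> I" for i
      using that \<open>v ` I \<subseteq> S\<close> by (blast intro: V.span_scale V.span_base)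
    ultimately show "f \<in> V.span S"
      by (simp add: V.span_sum)
  qed
next
  show "V.span S \<subseteq> lin_span S"
  proof
    fix f assume "f \<in> V.span S"
    then obtain T r where "finite T" "T \<subseteq> S" and f: "f = (\<Sum>u\<in>T. smult (r u) u)"
      unfolding V.span_explicit by blast
    obtain h where h: "bij_betw h {0..<card T} T"
      using ex_bij_betw_nat_finite[OF \<open>finite T\<close>] by blast
    have "f = (\<lambda>w. \<Sum>i\<in>{0..<card T}. r (h i) * h i w)"
      using sum.reindex_bij_betw[OF h, of "\<lambda>u. smult (r u) u"]
      by (simp add: f fun_eq_iff sum_fun_apply smult_def)
    moreover have "h ` {0..<card T} \<subseteq> S"
      using h \<open>T \<subseteq> S\<close> by (simp add: bij_betw_def)
    ultimately show "f \<in> lin_span S"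
      unfolding lin_span_def
      by (intro CollectI exI[of _ "{0..<card T}"] exI[of _ "r \<circ> h"] exI[of _ h]) simp
  qed
qed

lemma lin_span_image_comp:
  "lin_span ((\<lambda>f. f \<circ> h) ` S) = (\<lambda>f. f \<circ> h) ` lin_span S"
proof -
  have "module_hom smult smult (\<lambda>f. f \<circ> h)"
    by (simp add: module_hom_iff V.module_axioms fun_eq_iff smult_def)
  then show ?thesis
    unfolding lin_span_eq_span by (rule module_hom.span_image)
qed

lemma (in vector_space) span_reflected_combinations:
  assumes "c \<noteq> 0" and "g 0 = 0"
    and f_reflect: "\<And>i. i \<le> n \<Longrightarrow> f (n - i) = f i"
    and g_reflect: "\<And>i. i < n \<Longrightarrow> g (n - i) = g (Suc i)"
  shows "span ((\<lambda>i. f i + c *s g i) ` {..n}) = span (f ` {..n} \<union> g ` {..n})"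
proof -
  let ?h = "\<lambda>i. f i + c *s g i"
  have h_in: "?h i \<in> span (?h ` {..n})" if "i \<le> n" for i
    using that by (intro span_base) simp
  have g_in: "g i \<in> span (?h ` {..n})" if "i \<le> n" for i
    using that
  proof (induction i)
    case 0
    show ?case by (simp add: \<open>g 0 = 0\<close> span_zero)
  next
    case (Suc i)
    then have "i < n" by simp
    have "?h (n - i) - ?h i = c *s (g (Suc i) - g i)"
      using f_reflect[of i] g_reflect[OF \<open>i < n\<close>] \<open>i < n\<close> by (simp add: algebra_simps)
    then have "g (Suc i) = g i + inverse c *s (?h (n - i) - ?h i)"
      using \<open>c \<noteq> 0\<close> by simp
    then show ?case
      using Suc \<open>i < n\<close> h_in by (simp add: span_add span_scale span_diff)
  qed
  have f_in: "f i \<in> span (?h ` {..n})" if "i \<le> n" for i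
  proof -
    have "f i = ?h i - c *s g i" by simp
    then show ?thesis
      using that h_in g_in by (metis span_diff span_scale)
  qed
  have "?h ` {..n} \<subseteq> span (f ` {..n} \<union> g ` {..n})"
    by (auto intro!: span_add span_scale intro: span_base)
  with f_in g_in show ?thesis
    unfolding span_eq by auto
qed

lemma setcompr_add_eq_image: "{F i j | i j. i + j = (n::nat)} = (\<lambda>i. F i (n - i)) ` {..n}"
  by (auto simp: image_iff) (metis add_diff_cancel_left' atMost_iff le_add1, metis le_add_diff_inverse)

definition weight :: "word \<Rightarrow> letter \<Rightarrow> int" where
  "weight u b = (\<Sum>c\<leftarrow>u. pairing c b)"

lemma weight_append [simp]: "weight (u @ v) b = weight u b + weight v b"
  by (simp add: weight_def)

lemma weight_Cons [simp]: "weight (a # u) b = pairing a b + weight u b"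
  by (simp add: weight_def)

lemma weight_Nil [simp]: "weight [] b = 0"
  by (simp add: weight_def)

lemma pairing_commute: "pairing a b = pairing b a"
  by (simp add: pairing_def)

lemma qshuffle_Nil_right [simp]: "qshuffle q u [] = basis u"
  by (cases u) auto

lemma qshuffle_Cons_Cons:
  "qshuffle q (a # u) (b # v) =
     lcons a (qshuffle q u (b # v)) + smult (q powi weight (a # u) b) (lcons b (qshuffle q (a # u) v))"
  by (simp only: qshuffle.simps) (simp add: fun_eq_iff smult_def weight_def mult.commute)

declare qshuffle.simps(3) [simp del]

definition rcons :: "letter \<Rightarrow> (word \<Rightarrow> 'a::field) \<Rightarrow> word \<Rightarrow> 'a" where
  "rcons a f = (\<lambda>w. if w \<noteq> [] \<and> last w = a then f (butlast w) else 0)"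

lemma lcons_add [simp]: "lcons a (f + g) = lcons a f + lcons a g"
  by (auto simp: fun_eq_iff lcons_def split: list.split)

lemma lcons_smult [simp]: "lcons a (smult c f) = smult c (lcons a f)"
  by (auto simp: fun_eq_iff lcons_def smult_def split: list.split)

lemma lcons_basis [simp]: "lcons a (basis u) = basis (a # u)"
  by (auto simp: fun_eq_iff lcons_def basis_def split: list.split)

lemma rcons_add [simp]: "rcons a (f + g) = rcons a f + rcons a g"
  by (auto simp: fun_eq_iff rcons_def)

lemma rcons_smult [simp]: "rcons a (smult c f) = smult c (rcons a f)"
  by (auto simp: fun_eq_iff rcons_def smult_def)

lemma rcons_basis [simp]: "rcons a (basis u) = basis (u @ [a])"
  by (auto simp: fun_eq_iff rcons_def basis_def)

lemma rcons_lcons [simp]: "rcons b (lcons a f) = lcons a (rcons b f)"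
  by (auto simp: fun_eq_iff lcons_def rcons_def split: list.split)

lemma qshuffle_snoc_snoc:
  fixes q :: "'a::field"
  assumes "q \<noteq> 0"
  shows "qshuffle q (u @ [a]) (v @ [b]) =
     smult (q powi weight (v @ [b]) a) (rcons a (qshuffle q u (v @ [b])))
     + rcons b (qshuffle q (u @ [a]) v)"
proof -
  \<comment> \<open>The induction rules present these sums eta-expanded; \<open>plus_fun_apply\<close> would then
    evaluate them pointwise, out of reach of the linearity rules for \<open>lcons\<close> and \<open>rcons\<close>.\<close>
  note expand = qshuffle_Cons_Cons power_int_add[symmetric]
    pairing_commute V.scale_right_distrib add_ac
  show ?thesis
  proof (induction u arbitrary: v)
    case Nil
    show ?case
      using \<open>q \<noteq> 0\<close> by (induction v) (simp_all add: expand del: plus_fun_apply)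
  next
    case (Cons c u)
    note IH_u = Cons.IH
    show ?case
    proof (induction v)
      case Nil
      show ?case
        using \<open>q \<noteq> 0\<close> IH_u[of "[]"] by (simp add: expand del: plus_fun_apply)
    next
      case (Cons d v)
      show ?case
        using \<open>q \<noteq> 0\<close> IH_u[of "d # v"] Cons.IH by (simp add: expand del: plus_fun_apply)
    qed
  qed
qed

lemma plus_fun_comp: "(f + g) \<circ> h = (f \<circ> h) + (g \<circ> h)"
  by (simp add: fun_eq_iff)

lemma smult_comp: "smult c f \<circ> h = smult c (f \<circ> h)"
  by (simp add: fun_eq_iff smult_def)

lemma basis_comp_rev: "basis u \<circ> rev = basis (rev u)"
  by (auto simp: fun_eq_iff basis_def)

lemma rcons_comp_rev: "rcons a f \<circ> rev = lcons a (f \<circ> rev)"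
  by (auto simp: fun_eq_iff rcons_def lcons_def split: list.split)

lemma weight_rev [simp]: "weight (rev u) b = weight u b"
  by (simp add: weight_def rev_map[symmetric])

lemma qshuffle_comp_rev:
  fixes q :: "'a::field"
  assumes "q \<noteq> 0"
  shows "qshuffle q u v \<circ> rev = qshuffle q (rev v) (rev u)"
proof (induction u arbitrary: v rule: rev_induct)
  case Nil
  show ?case by (simp add: basis_comp_rev)
next
  case (snoc a u)
  note IH_u = snoc.IH
  show ?case
  proof (induction v rule: rev_induct)
    case Nil
    show ?case by (simp add: basis_comp_rev)
  next
    case (snoc b v)
    have "qshuffle q (u @ [a]) (v @ [b]) \<circ> rev =
        smult (q powi weight (v @ [b]) a) (lcons a (qshuffle q u (v @ [b]) \<circ> rev))
        + lcons b (qshuffle q (u @ [a]) v \<circ> rev)"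
      by (simp add: qshuffle_snoc_snoc[OF \<open>q \<noteq> 0\<close>] plus_fun_comp smult_comp rcons_comp_rev)
    also have "\<dots> = smult (q powi weight (b # rev v) a) (lcons a (qshuffle q (b # rev v) (rev u)))
        + lcons b (qshuffle q (rev v) (a # rev u))"
      by (simp add: IH_u snoc.IH add.commute)
    also have "\<dots> = qshuffle q (rev (v @ [b])) (rev (u @ [a]))"
      by (simp add: qshuffle_Cons_Cons add.commute)
    finally show ?case .
  qed
qed

fun other :: "letter \<Rightarrow> letter" where
  "other X = Y"
| "other Y = X"

definition Gword :: "letter \<Rightarrow> nat \<Rightarrow> word" where
  "Gword a k = concat (replicate k [other a, a])"

definition Wword :: "letter \<Rightarrow> nat \<Rightarrow> word" where
  "Wword a k = a # Gword a k"

lemma other_other [simp]: "other (other a) = a"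
  by (cases a) simp_all

lemma pairing_self [simp]: "pairing a a = 2"
  by (simp add: pairing_def)

lemma pairing_other [simp]: "pairing a (other a) = -2" "pairing (other a) a = -2"
  by (cases a; simp add: pairing_def)+

lemma Gword_0 [simp]: "Gword a 0 = []"
  by (simp add: Gword_def)

lemma Gword_Suc: "Gword a (Suc k) = other a # Wword a k"
  by (simp add: Gword_def Wword_def)

lemma weight_Gword [simp]: "weight (Gword a k) c = 0"
  by (induction k) (cases a; cases c; simp add: Gword_Suc Wword_def pairing_def)+

lemma weight_Wword [simp]: "weight (Wword a k) c = pairing a c"
  by (simp add: Wword_def)

lemma concat_replicate_pair_snoc:
  "concat (replicate k [a, b]) @ [a] = a # concat (replicate k [b, a])"
  by (induction k) simp_all

lemma rev_concat_replicate_pair: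
  "rev (concat (replicate k [a, b])) = concat (replicate k [b, a])"
  by (induction k) (simp_all add: replicate_app_Cons_same[symmetric] concat_replicate_pair_snoc)

lemma rev_Gword: "rev (Gword a k) = Gword (other a) k"
  by (simp add: Gword_def rev_concat_replicate_pair)

lemma rev_Wword: "rev (Wword a k) = Wword a k"
  by (simp add: Wword_def Gword_def rev_concat_replicate_pair concat_replicate_pair_snoc)

lemma Gw_eq_Gword: "Gw = Gword X" and Gtw_eq_Gword: "Gtw = Gword Y"
  by (simp_all add: fun_eq_iff Gw_def Gtw_def Gword_def)

lemma Wneg_eq_Wword: "Wneg = Wword X" and Wpos_eq_Wword: "Wpos = Wword Y"
  by (simp_all add: fun_eq_iff Wneg_def Wpos_def Wword_def Gword_def concat_replicate_pair_snoc)

context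
  fixes q :: "'a::field" and a :: letter
begin

abbreviation "GG m k \<equiv> qshuffle q (Gword a m) (Gword a k)"
abbreviation "GW m k \<equiv> qshuffle q (Gword a m) (Wword a k)"
abbreviation "WG m k \<equiv> qshuffle q (Wword a m) (Gword a k)"
abbreviation "WW m k \<equiv> qshuffle q (Wword a m) (Wword a k)"

lemma GW_Suc: "GW (Suc m) k = lcons (other a) (WW m k) + lcons a (GG (Suc m) k)"
  unfolding Gword_Suc Wword_def[of a k] qshuffle_Cons_Cons by simp

lemma WG_Suc: "WG m (Suc k) = lcons a (GG m (Suc k)) + smult (q powi -2) (lcons (other a) (WW m k))"
  unfolding Gword_Suc Wword_def[of a m] qshuffle_Cons_Cons by simp

lemma WW_unfold: "WW m k = lcons a (GW m k) + smult (q powi 2) (lcons a (WG m k))"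
  unfolding Wword_def[of a m] Wword_def[of a k] qshuffle_Cons_Cons by simp

lemma GG_Suc_Suc: "GG (Suc m) (Suc k) = lcons (other a) (WG m (Suc k)) + lcons (other a) (GW (Suc m) k)"
  unfolding Gword_Suc[of a m] Gword_Suc[of a k] qshuffle_Cons_Cons by simp

lemma GW_first_letter:
  "GW i j = lcons a (GG i j) + (if i = 0 then 0 else lcons (other a) (WW (i - 1) j))"
  by (cases i) (simp add: Wword_def, simp add: GW_Suc add.commute)

lemma GG_Suc_Suc_expand:
  "GG (Suc m) (Suc k) = lcons (other a) (lcons a (GG m (Suc k) + GG (Suc m) k))
     + smult (1 + q powi -2) (lcons (other a) (lcons (other a) (WW m k)))"
  by (simp add: GG_Suc_Suc WG_Suc GW_Suc V.scale_left_distrib add_ac)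

context
  assumes "q \<noteq> 0"
begin

lemma power2_mult_powi_minus_2: "q\<^sup>2 * q powi -2 = 1"
  using \<open>q \<noteq> 0\<close> by (simp add: power_int_minus)

lemma WW_Suc_Suc_expand:
  "WW (Suc m) (Suc k) = lcons a (lcons (other a) (WW m (Suc k) + WW (Suc m) k))
     + smult (1 + q powi 2) (lcons a (lcons a (GG (Suc m) (Suc k))))"
  by (simp add: WW_unfold[of "Suc m" "Suc k"] WG_Suc GW_Suc power2_mult_powi_minus_2
      V.scale_left_distrib V.scale_right_distrib add_ac)

lemma WW_0_Suc_expand:
  "WW 0 (Suc k) = lcons a (lcons (other a) (WW 0 k))
     + smult (1 + q powi 2) (lcons a (lcons a (GG 0 (Suc k))))"
  unfolding WW_unfold[of 0 "Suc k"]
  by (simp add: WG_Suc Wword_def[of a "Suc k"] power2_mult_powi_minus_2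
      V.scale_left_distrib V.scale_right_distrib add_ac)

lemma WW_Suc_0_expand:
  "WW (Suc m) 0 = lcons a (lcons (other a) (WW m 0))
     + smult (1 + q powi 2) (lcons a (lcons a (GG (Suc m) 0)))"
  unfolding WW_unfold[of "Suc m" 0]
  by (simp add: GW_Suc Wword_def[of a "Suc m"] V.scale_left_distrib add_ac)

lemma GG_WW_commute: "GG m k = GG k m \<and> WW m k = WW k m"
proof (induction "m + k" arbitrary: m k rule: less_induct)
  case less
  have GG: "GG m k = GG k m"
  proof (cases "m = 0 \<or> k = 0")
    case True
    then show ?thesis by auto
  next
    case False
    then obtain m' k' where m: "m = Suc m'" and k: "k = Suc k'"
      using not0_implies_Suc by blast
    have "GG m' (Suc k') = GG (Suc k') m'" "GG (Suc m') k' = GG k' (Suc m')" "WW m' k' = WW k' m'"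
      using less[of m' "Suc k'"] less[of "Suc m'" k'] less[of m' k'] by (simp_all add: m k)
    then show ?thesis
      by (simp add: m k GG_Suc_Suc_expand add.commute)
  qed
  have "WW m k = WW k m"
  proof (cases m; cases k)
    fix k' assume m: "m = 0" and k: "k = Suc k'"
    have "WW 0 k' = WW k' 0"
      using less[of 0 k'] by (simp add: m k)
    then show ?thesis
      using GG by (simp add: m k WW_0_Suc_expand WW_Suc_0_expand)
  next
    fix m' assume m: "m = Suc m'" and k: "k = 0"
    have "WW 0 m' = WW m' 0"
      using less[of 0 m'] by (simp add: m k)
    then show ?thesis
      using GG by (simp add: m k WW_0_Suc_expand WW_Suc_0_expand)
  next
    fix m' k' assume m: "m = Suc m'" and k: "k = Suc k'"
    have "WW m' (Suc k') = WW (Suc k') m'" "WW (Suc m') k' = WW k' (Suc m')"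
      using less[of m' "Suc k'"] less[of "Suc m'" k'] by (simp_all add: m k)
    then show ?thesis
      using GG by (simp add: m k WW_Suc_Suc_expand add.commute)
  qed simp
  with GG show ?case ..
qed

lemma WG_first_letter:
  "WG j i = lcons a (GG i j) + smult (q powi -2) (if i = 0 then 0 else lcons (other a) (WW (i - 1) j))"
  using GG_WW_commute by (cases i) (simp add: Wword_def, simp add: WG_Suc)

lemma lin_span_qshuffle_Gword_Wword:
  "lin_span {GW i j | i j. i + j = n} = lin_span {WG j i | i j. i + j = n}"
proof -
  define GG_part where "GG_part i = lcons a (GG i (n - i))" for i
  define WW_part where
    "WW_part i = (if i = 0 then 0 else lcons (other a) (WW (i - 1) (n - i)))" for i
  have WW_part_0: "WW_part 0 = 0"
    by (simp add: WW_part_def)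
  have GG_part_reflect: "GG_part (n - i) = GG_part i" if "i \<le> n" for i
    using that GG_WW_commute by (simp add: GG_part_def)
  have WW_part_reflect: "WW_part (n - i) = WW_part (Suc i)" if "i < n" for i
  proof -
    have "n - i - 1 = n - Suc i" "n - (n - i) = i" using that by simp_all
    then show ?thesis
      using that GG_WW_commute by (simp add: WW_part_def)
  qed
  have span_parts: "V.span ((\<lambda>i. GG_part i + smult c (WW_part i)) ` {..n}) =
      V.span (GG_part ` {..n} \<union> WW_part ` {..n})" if "c \<noteq> 0" for c
    using that WW_part_0 GG_part_reflect WW_part_reflect
    by (rule V.span_reflected_combinations[where f = GG_part and g = WW_part])
  have "{GW i j | i j. i + j = n} = (\<lambda>i. GG_part i + smult 1 (WW_part i)) ` {..n}"
    unfolding setcompr_add_eq_image by (simp add: GW_first_letter GG_part_def WW_part_def)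
  moreover have "{WG j i | i j. i + j = n} = (\<lambda>i. GG_part i + smult (q powi -2) (WW_part i)) ` {..n}"
    unfolding setcompr_add_eq_image[of "\<lambda>i j. WG j i"]
    by (simp add: WG_first_letter GG_part_def WW_part_def)
  ultimately show ?thesis
    using span_parts[of 1] span_parts[of "q powi -2"] \<open>q \<noteq> 0\<close> by (simp add: lin_span_eq_span)
qed

lemma lin_span_qshuffle_Gword_other_Wword:
  "lin_span {qshuffle q (Gword (other a) i) (Wword a j) | i j. i + j = n} =
   lin_span {qshuffle q (Wword a j) (Gword (other a) i) | i j. i + j = n}"
proof -
  have rev_WG: "{qshuffle q (Gword (other a) i) (Wword a j) | i j. i + j = n} =
      (\<lambda>f. f \<circ> rev) ` {WG j i | i j. i + j = n}"
    by (simp add: setcompr_add_eq_image image_image qshuffle_comp_rev[OF \<open>q \<noteq> 0\<close>]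
        rev_Gword rev_Wword)
  have rev_GW: "{qshuffle q (Wword a j) (Gword (other a) i) | i j. i + j = n} =
      (\<lambda>f. f \<circ> rev) ` {GW i j | i j. i + j = n}"
    by (simp add: setcompr_add_eq_image image_image qshuffle_comp_rev[OF \<open>q \<noteq> 0\<close>]
        rev_Gword rev_Wword)
  show ?thesis
    unfolding rev_WG rev_GW lin_span_image_comp lin_span_qshuffle_Gword_Wword ..
qed

end

end

theorem proposition6p2:
  fixes q :: "'a::field" and n :: nat
  assumes "q \<noteq> 0"
    and "\<And>m::nat. m > 0 \<Longrightarrow> q ^ m \<noteq> 1"
  shows "lin_span {qshuffle q (Gw i) (Wneg j) | i j. i + j = n}
           = lin_span {qshuffle q (Wneg j) (Gw i) | i j. i + j = n}
       \<and> lin_span {qshuffle q (Gw i) (Wpos j) | i j. i + j = n}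
           = lin_span {qshuffle q (Wpos j) (Gw i) | i j. i + j = n}
       \<and> lin_span {qshuffle q (Gtw i) (Wneg j) | i j. i + j = n}
           = lin_span {qshuffle q (Wneg j) (Gtw i) | i j. i + j = n}
       \<and> lin_span {qshuffle q (Gtw i) (Wpos j) | i j. i + j = n}
           = lin_span {qshuffle q (Wpos j) (Gtw i) | i j. i + j = n}"
proof -
  note GW_WG = lin_span_qshuffle_Gword_Wword[OF \<open>q \<noteq> 0\<close>]
  note GW_WG_rev = lin_span_qshuffle_Gword_other_Wword[OF \<open>q \<noteq> 0\<close>]
  show ?thesis
    unfolding Gw_eq_Gword Gtw_eq_Gword Wneg_eq_Wword Wpos_eq_Wword
    using GW_WG[of X] GW_WG_rev[of Y, unfolded other.simps]
      GW_WG_rev[of X, unfolded other.simps] GW_WG[of Y]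
    by (intro conjI)
qed

end
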